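(* Let $P$ be a finite set of predicates, let $\eta = \sigma_1,\ldots,\sigma_n$ be a trace over the alphabet $\Sigma = 2^P$ (so each $\sigma_i \subseteq P$), and let $\varphi$ be an LTLf formula over $P$. Run the query-processing algorithm described in the context on $\eta$ and $\varphi$. If some contiguous sub-trace $\sigma_k,\ldots,\sigma_\ell$ ($1 \le k \le \ell \le n$) of $\eta$ satisfies $\varphi$, then the algorithm returns a contiguous sub-trace $\sigma_k,\ldots,\sigma_\ell$ of $\eta$ with $(\sigma_k,\ldots,\sigma_\ell) \models \varphi$. Moreover, the algorithm processes (reads) $\eta$ at most twice: once forward and at most once backward.
   Context: LTLf syntax over a finite set of predicates $P$: each $p\in P$ is a formula; if $\varphi_1,\varphi_2$ are formulas then so are $\varphi_1\wedge\varphi_2$, $\neg\varphi_1$, $X\varphi_1$ ("next") and $\varphi_1 U \varphi_2$ ("until"); $F\varphi$ abbreviates $\texttt{True}\, U\, \varphi$. Semantics: for a finite nonempty trace $\eta=\sigma_1,\ldots,\sigma_k$ with $\sigma_i\subseteq P$: $\eta\models p$ iff $p\in\sigma_1$; $\eta\models\varphi_1\wedge\varphi_2$ iff $\eta\models\varphi_1$ and $\eta\models\varphi_2$; $\eta\models\neg\varphi_1$ iff $\eta\not\models\varphi_1$; $\eta\models X\varphi_1$ iff $(\sigma_2,\ldots,\sigma_k)\models\varphi_1$; $\eta\models\varphi_1 U\varphi_2$ iff there is $1\le i\le k$ with $(\sigma_i,\ldots,\sigma_k)\models\varphi_2$ and for each $1\le j\le i$, $(\sigma_j,\ldots,\sigma_k)\models\varphi_1$.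 A DFA is $\mathcal{A}=\langle\Sigma,Q,\delta,q_0,Acc\rangle$ with transition function $\delta:Q\times\Sigma\to Q$, initial state $q_0$, accepting states $Acc\subseteq Q$; it accepts a finite word if its run from $q_0$ ends in $Acc$. It is known (and may be assumed) that for every LTLf formula $\psi$ over $P$ there is a DFA $\mathcal{A}_\psi$ over $2^P$ accepting exactly the traces satisfying $\psi$. The algorithm: construct DFAs $\mathcal{A}_\varphi$ and $\mathcal{A}_{F\varphi}$ (with $\mathcal{A}_\varphi=\langle 2^P,Q,\delta,q_0,Acc\rangle$). Feed $\eta$ letter by letter (forward) to $\mathcal{A}_{F\varphi}$ until it first visits an accepting state, say after reading $\sigma_\ell$; if this never happens, report that no sub-trace exists. Otherwise read $\eta$ backward starting from $\sigma_\ell$, maintaining a set $Q'\subseteq Q$ initialized to $Acc$; upon reading a letter $\sigma$, update $Q' := \{q\in Q : \exists q'\in Q' \text{ with } q'=\delta(q,\sigma)\}$; stop as soon as $q_0\in Q'$, say after reading $\sigma_k$, and return $\sigma_k,\ldots,\sigma_\ell$. *)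

theory Defs
  imports Main
begin

datatype 'p ltlf =
    TT
  | Atom 'p
  | And "'p ltlf" "'p ltlf"
  | Neg "'p ltlf"
  | Next "'p ltlf"
  | Until "'p ltlf" "'p ltlf"

definition Ev :: "'p ltlf \<Rightarrow> 'p ltlf" where
  "Ev \<phi> = Until TT \<phi>"

fun atoms :: "'p ltlf \<Rightarrow> 'p set" where
  "atoms TT = {}"
| "atoms (Atom p) = {p}"
| "atoms (And a b) = atoms a \<union> atoms b"
| "atoms (Neg a) = atoms a"
| "atoms (Next a) = atoms a"
| "atoms (Until a b) = atoms a \<union> atoms b"

text \<open>Satisfaction at position i (0-based) of a finite trace; the suffix starting at i.\<close>
fun sat_at :: "'p set list \<Rightarrow> nat \<Rightarrow> 'p ltlf \<Rightarrow> bool" where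
  "sat_at w i TT = True"
| "sat_at w i (Atom p) = (p \<in> w ! i)"
| "sat_at w i (And a b) = (sat_at w i a \<and> sat_at w i b)"
| "sat_at w i (Neg a) = (\<not> sat_at w i a)"
| "sat_at w i (Next a) = (Suc i < length w \<and> sat_at w (Suc i) a)"
| "sat_at w i (Until a b) =
     (\<exists>j. i \<le> j \<and> j < length w \<and> sat_at w j b \<and> (\<forall>m. i \<le> m \<and> m \<le> j \<longrightarrow> sat_at w m a))"

definition models :: "'p set list \<Rightarrow> 'p ltlf \<Rightarrow> bool" where
  "models w \<phi> \<longleftrightarrow> w \<noteq> [] \<and> sat_at w 0 \<phi>"

definition run :: "('q \<Rightarrow> 'a \<Rightarrow> 'q) \<Rightarrow> 'q \<Rightarrow> 'a list \<Rightarrow> 'q" where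
  "run \<delta> q w = fold (\<lambda>a s. \<delta> s a) w q"

definition dfa_accepts :: "('q \<Rightarrow> 'a \<Rightarrow> 'q) \<Rightarrow> 'q \<Rightarrow> 'q set \<Rightarrow> 'a list \<Rightarrow> bool" where
  "dfa_accepts \<delta> q0 Acc w \<longleftrightarrow> run \<delta> q0 w \<in> Acc"

definition recognizes :: "'p set \<Rightarrow> ('q \<Rightarrow> 'p set \<Rightarrow> 'q) \<Rightarrow> 'q \<Rightarrow> 'q set \<Rightarrow> 'p ltlf \<Rightarrow> bool" where
  "recognizes P \<delta> q0 Acc \<psi> \<longleftrightarrow>
     (\<forall>w. w \<noteq> [] \<and> set w \<subseteq> Pow P \<longrightarrow> (dfa_accepts \<delta> q0 Acc w \<longleftrightarrow> models w \<psi>))"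

text \<open>Returns the 1-based index l of the letter after which acceptance first occurs,
  together with the number of letters read.\<close>
fun fwd :: "('q \<Rightarrow> 'a \<Rightarrow> 'q) \<Rightarrow> 'q set \<Rightarrow> 'q \<Rightarrow> nat \<Rightarrow> 'a list \<Rightarrow> nat option \<times> nat" where
  "fwd \<delta> Acc q i [] = (None, 0)"
| "fwd \<delta> Acc q i (a # w) =
     (let q' = \<delta> q a in
      if q' \<in> Acc then (Some (Suc i), 1)
      else (let (r, c) = fwd \<delta> Acc q' (Suc i) w in (r, Suc c)))"

text \<open>Backward pass: the letters are given in reverse order starting from sigma_l, i is the
  1-based index of the next letter to be read; S is the current set Q'.\<close>
fun bwd :: "('q \<Rightarrow> 'a \<Rightarrow> 'q) \<Rightarrow> 'q \<Rightarrow> 'q set \<Rightarrow> nat \<Rightarrow> 'a list \<Rightarrow> nat option \<times> nat" where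
  "bwd \<delta> q0 S i [] = (None, 0)"
| "bwd \<delta> q0 S i (a # w) =
     (let S' = {q. \<delta> q a \<in> S} in
      if q0 \<in> S' then (Some i, 1)
      else (let (r, c) = bwd \<delta> q0 S' (i - 1) w in (r, Suc c)))"

text \<open>The whole algorithm: arguments are the DFA for phi (delta, q0, Acc), the DFA for F phi
  (deltaF, q0F, AccF) and the trace eta. Returns (result, forward reads, backward reads),
  where result = Some (k, l) means the sub-trace sigma_k ... sigma_l (1-based) is returned.\<close>
definition query :: "('q \<Rightarrow> 'a \<Rightarrow> 'q) \<Rightarrow> 'q \<Rightarrow> 'q set \<Rightarrow>
                     ('r \<Rightarrow> 'a \<Rightarrow> 'r) \<Rightarrow> 'r \<Rightarrow> 'r set \<Rightarrow> 'a list \<Rightarrow>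
                     (nat \<times> nat) option \<times> nat \<times> nat" where
  "query \<delta> q0 Acc \<delta>F q0F AccF \<eta> =
     (case fwd \<delta>F AccF q0F 0 \<eta> of
        (None, cf) \<Rightarrow> (None, cf, 0)
      | (Some l, cf) \<Rightarrow>
          (case bwd \<delta> q0 Acc l (rev (take l \<eta>)) of
             (None, cb) \<Rightarrow> (None, cf, cb)
           | (Some k, cb) \<Rightarrow> (Some (k, l), cf, cb)))"

text \<open>Contiguous sub-trace sigma_k ... sigma_l (1-based, inclusive).\<close>
definition subtrace :: "'a list \<Rightarrow> nat \<Rightarrow> nat \<Rightarrow> 'a list" where
  "subtrace \<eta> k l = drop (k - 1) (take l \<eta>)"

end

theory Submission
  imports Defs
begin

text \<open>
  The DFA for F phi accepts a prefix sigma_1 ... sigma_l exactly when some suffix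
  sigma_k ... sigma_l of it satisfies phi. So if any sub-trace satisfies phi, the forward pass
  stops at some l for which such a k exists. Reading sigma_l, ..., sigma_k backwards leaves in
  Q' exactly the states from which sigma_k ... sigma_l leads into Acc; hence the backward pass
  reaches q0, at the largest such k, and the returned sub-trace is accepted by the DFA for phi,
  i.e. satisfies phi. Each pass reads every letter at most once.
  Finiteness of P and of the state types and the condition on the atoms of phi only serve to
  make the two DFAs exist; once the DFAs are given, the proof does not use them.
\<close>

lemma sat_at_drop:
  assumes "j \<le> length w"
  shows "sat_at (drop j w) i \<phi> \<longleftrightarrow> sat_at w (i + j) \<phi>"
proof (induction \<phi> arbitrary: i)
  case (Until a b)
  have "sat_at (drop j w) i (Until a b) \<longleftrightarrow>
      (\<exists>x\<ge>i. x + j < length w \<and> sat_at w (x + j) b \<and>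
        (\<forall>m. i \<le> m \<and> m \<le> x \<longrightarrow> sat_at w (m + j) a))"
    using Until.IH by (auto simp: less_diff_conv)
  also have "\<dots> \<longleftrightarrow> sat_at w (i + j) (Until a b)"
  proof
    assume "\<exists>x\<ge>i. x + j < length w \<and> sat_at w (x + j) b \<and>
      (\<forall>m. i \<le> m \<and> m \<le> x \<longrightarrow> sat_at w (m + j) a)"
    then obtain x where "x \<ge> i" "x + j < length w" "sat_at w (x + j) b"
      and before: "\<And>m. i \<le> m \<Longrightarrow> m \<le> x \<Longrightarrow> sat_at w (m + j) a" by blast
    moreover have "sat_at w m a" if "i + j \<le> m" "m \<le> x + j" for m
      using before[of "m - j"] that by simp
    ultimately show "sat_at w (i + j) (Until a b)"
      by (auto intro!: exI[of _ "x + j"])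
  next
    assume "sat_at w (i + j) (Until a b)"
    then obtain y where "i + j \<le> y" "y < length w" "sat_at w y b"
      and before: "\<And>m. i + j \<le> m \<Longrightarrow> m \<le> y \<Longrightarrow> sat_at w m a" by auto
    then show "\<exists>x\<ge>i. x + j < length w \<and> sat_at w (x + j) b \<and>
      (\<forall>m. i \<le> m \<and> m \<le> x \<longrightarrow> sat_at w (m + j) a)"
      by (intro exI[of _ "y - j"]) auto
  qed
  finally show ?case .
qed (auto simp: assms add.commute)

lemma models_drop_iff_sat_at: "j < length w \<Longrightarrow> models (drop j w) \<phi> \<longleftrightarrow> sat_at w j \<phi>"
  using sat_at_drop[of j w 0 \<phi>] by (simp add: models_def)

lemma models_Ev_iff: "models w (Ev \<phi>) \<longleftrightarrow> (\<exists>j < length w. models (drop j w) \<phi>)"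
proof -
  have "models w (Ev \<phi>) \<longleftrightarrow> (\<exists>j < length w. sat_at w j \<phi>)"
    by (auto simp: models_def Ev_def)
  also have "\<dots> \<longleftrightarrow> (\<exists>j < length w. models (drop j w) \<phi>)"
    using models_drop_iff_sat_at by blast
  finally show ?thesis .
qed

lemma run_Cons: "run \<delta> q (a # w) = run \<delta> (\<delta> q a) w"
  by (simp add: run_def)

lemma run_snoc: "run \<delta> q (w @ [a]) = \<delta> (run \<delta> q w) a"
  by (simp add: run_def)

lemma recognizes_run_iff:
  assumes "recognizes P \<delta> q0 Acc \<psi>" and "w \<noteq> []" and "set w \<subseteq> Pow P"
  shows "run \<delta> q0 w \<in> Acc \<longleftrightarrow> models w \<psi>"
  using assms by (simp add: recognizes_def dfa_accepts_def)

lemma fwd_Some: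
  "fst (fwd \<delta> Acc q i w) = Some l \<Longrightarrow>
     i < l \<and> l \<le> i + length w \<and> run \<delta> q (take (l - i) w) \<in> Acc"
proof (induction w arbitrary: q i)
  case (Cons a w)
  show ?case
  proof (cases "\<delta> q a \<in> Acc")
    case True
    with Cons.prems have "l = Suc i" by simp
    with True show ?thesis by (simp add: run_def)
  next
    case False
    with Cons.prems have "fst (fwd \<delta> Acc (\<delta> q a) (Suc i) w) = Some l"
      by (simp split: prod.splits)
    from Cons.IH[OF this] have "Suc i < l" "l \<le> Suc i + length w"
      and "run \<delta> (\<delta> q a) (take (l - Suc i) w) \<in> Acc"
      by auto
    moreover have "l - i = Suc (l - Suc i)"
      using \<open>Suc i < l\<close> by simp
    ultimately show ?thesis by (simp add: run_Cons)
  qed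
qed simp

lemma fwd_None:
  "fst (fwd \<delta> Acc q i w) = None \<Longrightarrow> 0 < n \<Longrightarrow> n \<le> length w \<Longrightarrow>
     run \<delta> q (take n w) \<notin> Acc"
proof (induction w arbitrary: q i n)
  case (Cons a w)
  then have rejected: "\<delta> q a \<notin> Acc"
    and rest: "fst (fwd \<delta> Acc (\<delta> q a) (Suc i) w) = None"
    by (auto simp: Let_def split: if_splits prod.splits)
  have "run \<delta> q (take n (a # w)) = run \<delta> (\<delta> q a) (take (n - 1) w)"
    using \<open>0 < n\<close> by (cases n) (simp_all add: run_Cons)
  moreover have "run \<delta> (\<delta> q a) (take (n - 1) w) \<notin> Acc"
    using rejected Cons.IH[OF rest, of "n - 1"] Cons.prems
    by (cases "n = 1") (simp_all add: run_def)
  ultimately show ?case by simp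
qed simp

lemma fwd_reads_le: "snd (fwd \<delta> Acc q i w) \<le> length w"
proof (induction w arbitrary: q i)
  case (Cons a w)
  show ?case
    using Cons.IH[of "\<delta> q a" "Suc i"] by (auto simp: Let_def split: prod.split)
qed simp

text \<open>The input v of bwd is the trace reversed, so rev (take m v) is the block of the
  last m letters read, in trace order.\<close>

lemma bwd_Some:
  "fst (bwd \<delta> q0 S i v) = Some k \<Longrightarrow>
     \<exists>m. 0 < m \<and> m \<le> length v \<and> k = i - (m - 1) \<and> run \<delta> q0 (rev (take m v)) \<in> S"
proof (induction v arbitrary: S i)
  case (Cons a v)
  show ?case
  proof (cases "\<delta> q0 a \<in> S")
    case True
    with Cons.prems show ?thesis by (intro exI[of _ 1]) (simp add: run_def)
  next
    case False
    with Cons.prems have "fst (bwd \<delta> q0 {q. \<delta> q a \<in> S} (i - 1) v) = Some k"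
      by (simp split: prod.splits)
    with Cons.IH obtain m where
      "0 < m" "m \<le> length v" "k = i - 1 - (m - 1)" "run \<delta> q0 (rev (take m v)) \<in> {q. \<delta> q a \<in> S}"
      by blast
    then show ?thesis by (intro exI[of _ "Suc m"]) (auto simp: run_snoc)
  qed
qed simp

lemma bwd_None:
  "fst (bwd \<delta> q0 S i v) = None \<Longrightarrow> 0 < m \<Longrightarrow> m \<le> length v \<Longrightarrow>
     run \<delta> q0 (rev (take m v)) \<notin> S"
proof (induction v arbitrary: S i m)
  case (Cons a v)
  then have rejected: "\<delta> q0 a \<notin> S"
    and rest: "fst (bwd \<delta> q0 {q. \<delta> q a \<in> S} (i - 1) v) = None"
    by (auto split: if_splits prod.splits)
  have "run \<delta> q0 (rev (take m (a # v))) = \<delta> (run \<delta> q0 (rev (take (m - 1) v))) a"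
    using \<open>0 < m\<close> by (cases m) (simp_all add: run_snoc)
  moreover have "run \<delta> q0 (rev (take (m - 1) v)) \<notin> {q. \<delta> q a \<in> S}"
    using rejected Cons.IH[OF rest, of "m - 1"] Cons.prems
    by (cases "m = 1") (simp_all add: run_def)
  ultimately show ?case by simp
qed simp

lemma bwd_reads_le: "snd (bwd \<delta> q0 S i v) \<le> length v"
proof (induction v arbitrary: S i)
  case (Cons a v)
  show ?case
    using Cons.IH[of "{q. \<delta> q a \<in> S}" "i - 1"] by (auto simp: Let_def split: prod.split)
qed simp

lemma query_Some_iff:
  "fst (query \<delta> q0 Acc \<delta>F q0F AccF \<eta>) = Some (k, l) \<longleftrightarrow>
     fst (fwd \<delta>F AccF q0F 0 \<eta>) = Some l \<and> fst (bwd \<delta> q0 Acc l (rev (take l \<eta>))) = Some k"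
  by (auto simp: query_def split: prod.split option.split)

lemma query_forward_reads:
  "fst (snd (query \<delta> q0 Acc \<delta>F q0F AccF \<eta>)) = snd (fwd \<delta>F AccF q0F 0 \<eta>)"
  by (simp add: query_def split: prod.split option.split)

lemma query_backward_reads:
  "snd (snd (query \<delta> q0 Acc \<delta>F q0F AccF \<eta>)) =
     (case fst (fwd \<delta>F AccF q0F 0 \<eta>) of
        None \<Rightarrow> 0
      | Some l \<Rightarrow> snd (bwd \<delta> q0 Acc l (rev (take l \<eta>))))"
  by (simp add: query_def split: prod.split option.split)

lemma query_backward_reads_le: "snd (snd (query \<delta> q0 Acc \<delta>F q0F AccF \<eta>)) \<le> length \<eta>"
proof -
  have "snd (bwd \<delta> q0 Acc l (rev (take l \<eta>))) \<le> length \<eta>" for l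
    using bwd_reads_le[of \<delta> q0 Acc l "rev (take l \<eta>)"] by simp
  then show ?thesis by (simp add: query_backward_reads split: option.split)
qed

lemma query_sound:
  assumes "recognizes P \<delta> q0 Acc \<phi>" and "set \<eta> \<subseteq> Pow P"
    and "fst (query \<delta> q0 Acc \<delta>F q0F AccF \<eta>) = Some (k, l)"
  shows "1 \<le> k \<and> k \<le> l \<and> l \<le> length \<eta> \<and> models (subtrace \<eta> k l) \<phi>"
proof -
  from assms(3) have fw: "fst (fwd \<delta>F AccF q0F 0 \<eta>) = Some l"
    and bw: "fst (bwd \<delta> q0 Acc l (rev (take l \<eta>))) = Some k"
    by (simp_all add: query_Some_iff)
  from fwd_Some[OF fw] have l: "0 < l" "l \<le> length \<eta>" by simp_all
  from bwd_Some[OF bw] l obtain m where m: "0 < m" "m \<le> l" "k = l - (m - 1)"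
    and accepted: "run \<delta> q0 (rev (take m (rev (take l \<eta>)))) \<in> Acc"
    by auto
  have "rev (take m (rev (take l \<eta>))) = subtrace \<eta> k l"
    using m l by (simp add: take_rev subtrace_def)
  moreover have "subtrace \<eta> k l \<noteq> []" and "set (subtrace \<eta> k l) \<subseteq> Pow P"
    using m l assms(2) by (auto simp: subtrace_def dest: in_set_dropD in_set_takeD)
  ultimately have "models (subtrace \<eta> k l) \<phi>"
    using accepted recognizes_run_iff[OF assms(1)] by simp
  moreover have "1 \<le> k" "k \<le> l"
    using m by arith+
  ultimately show ?thesis using l by blast
qed

lemma query_complete:
  assumes "recognizes P \<delta> q0 Acc \<phi>" and "recognizes P \<delta>F q0F AccF (Ev \<phi>)"
    and "set \<eta> \<subseteq> Pow P"
    and "1 \<le> k" and "k \<le> l" and "l \<le> length \<eta>" and "models (subtrace \<eta> k l) \<phi>"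
  shows "fst (query \<delta> q0 Acc \<delta>F q0F AccF \<eta>) \<noteq> None"
proof -
  have prefix_letters: "set (take n \<eta>) \<subseteq> Pow P" for n
    using assms(3) by (auto dest: in_set_takeD)
  have "models (take l \<eta>) (Ev \<phi>)"
    unfolding models_Ev_iff
    using assms(4-7) by (intro exI[of _ "k - 1"]) (simp add: subtrace_def)
  moreover have "take l \<eta> \<noteq> []"
    using assms(4-6) by auto
  ultimately have "run \<delta>F q0F (take l \<eta>) \<in> AccF"
    using recognizes_run_iff[OF assms(2) _ prefix_letters] by blast
  then have "fst (fwd \<delta>F AccF q0F 0 \<eta>) \<noteq> None"
    using fwd_None[of \<delta>F AccF q0F 0 \<eta> l] assms(4-6) by auto
  then obtain l' where fw: "fst (fwd \<delta>F AccF q0F 0 \<eta>) = Some l'"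
    by blast
  from fwd_Some[OF fw]
  have l': "0 < l'" "l' \<le> length \<eta>" "run \<delta>F q0F (take l' \<eta>) \<in> AccF"
    by simp_all
  define u where "u = take l' \<eta>"
  have u: "length u = l'" "u \<noteq> []" "set u \<subseteq> Pow P"
    using l' prefix_letters by (auto simp: u_def)
  with l' have "models u (Ev \<phi>)"
    using recognizes_run_iff[OF assms(2)] by (simp add: u_def)
  then obtain j where j: "j < l'" and "models (drop j u) \<phi>"
    using u by (auto simp: models_Ev_iff)
  moreover have "drop j u \<noteq> []" and "set (drop j u) \<subseteq> Pow P"
    using j u set_drop_subset by fastforce+
  ultimately have "run \<delta> q0 (drop j u) \<in> Acc"
    using recognizes_run_iff[OF assms(1)] by blast
  moreover have "drop j u = rev (take (l' - j) (rev u))"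
    using j u by (simp add: take_rev)
  ultimately obtain k' where "fst (bwd \<delta> q0 Acc l' (rev u)) = Some k'"
    using bwd_None[of \<delta> q0 Acc l' "rev u" "l' - j"] j u by fastforce
  with fw have "fst (query \<delta> q0 Acc \<delta>F q0F AccF \<eta>) = Some (k', l')"
    by (simp add: query_Some_iff u_def)
  then show ?thesis by simp
qed

theorem mainTheorem1:
  fixes P :: "'p set" and \<eta> :: "'p set list" and \<phi> :: "'p ltlf"
    and \<delta> :: "'q::finite \<Rightarrow> 'p set \<Rightarrow> 'q" and q0 :: 'q and Acc :: "'q set"
    and \<delta>F :: "'r::finite \<Rightarrow> 'p set \<Rightarrow> 'r" and q0F :: 'r and AccF :: "'r set"
  assumes "finite P"
    and "set \<eta> \<subseteq> Pow P"
    and "atoms \<phi> \<subseteq> P"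
    and "recognizes P \<delta> q0 Acc \<phi>"
    and "recognizes P \<delta>F q0F AccF (Ev \<phi>)"
  shows "((\<exists>k l. 1 \<le> k \<and> k \<le> l \<and> l \<le> length \<eta> \<and> models (subtrace \<eta> k l) \<phi>) \<longrightarrow>
            (\<exists>k l. fst (query \<delta> q0 Acc \<delta>F q0F AccF \<eta>) = Some (k, l) \<and>
                   1 \<le> k \<and> k \<le> l \<and> l \<le> length \<eta> \<and> models (subtrace \<eta> k l) \<phi>))
       \<and> fst (snd (query \<delta> q0 Acc \<delta>F q0F AccF \<eta>)) \<le> length \<eta>
       \<and> snd (snd (query \<delta> q0 Acc \<delta>F q0F AccF \<eta>)) \<le> length \<eta>"
proof (intro conjI impI)
  assume "\<exists>k l. 1 \<le> k \<and> k \<le> l \<and> l \<le> length \<eta> \<and> models (subtrace \<eta> k l) \<phi>"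
  then obtain k l where "1 \<le> k" "k \<le> l" "l \<le> length \<eta>" "models (subtrace \<eta> k l) \<phi>"
    by blast
  then have "fst (query \<delta> q0 Acc \<delta>F q0F AccF \<eta>) \<noteq> None"
    by (rule query_complete[OF assms(4,5,2)])
  then obtain k' l' where returned: "fst (query \<delta> q0 Acc \<delta>F q0F AccF \<eta>) = Some (k', l')"
    by auto
  show "\<exists>k l. fst (query \<delta> q0 Acc \<delta>F q0F AccF \<eta>) = Some (k, l) \<and>
      1 \<le> k \<and> k \<le> l \<and> l \<le> length \<eta> \<and> models (subtrace \<eta> k l) \<phi>"
    using returned query_sound[OF assms(4,2) returned] by blast
next
  show "fst (snd (query \<delta> q0 Acc \<delta>F q0F AccF \<eta>)) \<le> length \<eta>"
    by (simp add: query_forward_reads fwd_reads_le)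
  show "snd (snd (query \<delta> q0 Acc \<delta>F q0F AccF \<eta>)) \<le> length \<eta>"
    by (rule query_backward_reads_le)
qed

end
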